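(* Let $\mathcal S=\{y\in\mathbb R^d:\|y\|=1,\ y_i>0\text{ for all }i\}$. For $Y_0\in\mathcal S$ define the Markov chain $Y_k=\dfrac{A_{I_k}Y_{k-1}}{\|A_{I_k}Y_{k-1}\|}$, where $I_1,I_2,\dots$ are i.i.d. uniform on $\{1,\dots,d\}$. Then there is a unique probability measure $\nu$ on $\mathcal S$ which is the limit (in the weak sense) of the law of $Y_k$ as $k\to\infty$, and $\nu$ is the same for every choice of $Y_0\in\mathcal S$.
   Context: $d\ge2$; $P=(p_{ij})$ is the transition matrix of a connected network on $\{1,\dots,d\}$ without loops ($p_{ii}=0$, irreducible). For $x\in\mathbb R^d$, $\hat x_i=\sum_j p_{ij}x_j$. Fix $e_1,\dots,e_d\in(0,1)$. The linear map $A_i$ is given by $(A_ix)_j=x_j$ for $j\ne i$ and $(A_ix)_i=e_i\hat x_i$. $\|\cdot\|$ is the Euclidean norm. *)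

theory Defs
  imports "HOL-Probability.Probability"
begin

text \<open>Vectors in R^d are modelled as real^'n with 'n a finite index type, d = CARD('n).
  The transition matrix is P :: 'n => 'n => real.\<close>

definition hatx :: "('n::finite \<Rightarrow> 'n \<Rightarrow> real) \<Rightarrow> real^'n \<Rightarrow> 'n \<Rightarrow> real" where
  "hatx P x i = (\<Sum>j\<in>UNIV. P i j * x $ j)"

definition Amap :: "('n::finite \<Rightarrow> 'n \<Rightarrow> real) \<Rightarrow> ('n \<Rightarrow> real) \<Rightarrow> 'n \<Rightarrow> real^'n \<Rightarrow> real^'n" where
  "Amap P e i x = (\<chi> j. if j = i then e i * hatx P x i else x $ j)"

definition stepY :: "('n::finite \<Rightarrow> 'n \<Rightarrow> real) \<Rightarrow> ('n \<Rightarrow> real) \<Rightarrow> 'n \<Rightarrow> real^'n \<Rightarrow> real^'n" where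
  "stepY P e i y = (1 / norm (Amap P e i y)) *\<^sub>R Amap P e i y"

fun lawY :: "('n::finite \<Rightarrow> 'n \<Rightarrow> real) \<Rightarrow> ('n \<Rightarrow> real) \<Rightarrow> nat \<Rightarrow> real^'n \<Rightarrow> (real^'n) pmf" where
  "lawY P e 0 y = return_pmf y"
| "lawY P e (Suc k) y = bind_pmf (lawY P e k y) (\<lambda>x. map_pmf (\<lambda>i. stepY P e i x) (pmf_of_set UNIV))"

definition Spos :: "(real^'n::finite) set" where
  "Spos = {y. norm y = 1 \<and> (\<forall>i. y $ i > 0)}"

definition weak_conv_on :: "'a::topological_space set \<Rightarrow> (nat \<Rightarrow> 'a measure) \<Rightarrow> 'a measure \<Rightarrow> bool" where
  "weak_conv_on S \<mu>s \<nu> \<longleftrightarrow>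
     (\<forall>f :: 'a \<Rightarrow> real. continuous_on S f \<and> bounded (f ` S) \<longrightarrow>
        (\<lambda>k. \<integral>x. indicator S x * f x \<partial>(\<mu>s k)) \<longlonglongrightarrow> (\<integral>x. indicator S x * f x \<partial>\<nu>))"

end

theory Submission
  imports Defs
begin

text \<open>
  Reversing an i.i.d. word does not change its law, so \<open>Y\<^sub>k\<close> has the law of the normalised
  backward product \<open>A\<^bsub>I\<^sub>1\<^esub> \<cdots> A\<^bsub>I\<^sub>k\<^esub> Y\<^sub>0\<close>.
  Irreducibility provides a word \<open>w\<close> whose product matrix has all rows with the same nonempty
  support, hence with comparable entries; by Birkhoff's argument such a matrix contracts the
  Hilbert projective distance by a fixed factor \<open>1 - \<kappa>\<^sup>2\<close>, while every \<open>A\<^sub>i\<close> is nonnegative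
  and does not expand it. Almost every i.i.d. stream contains infinitely many aligned copies of
  \<open>w\<close>, so the normalised backward products converge to a limit in \<open>S\<close> that does not depend on
  \<open>Y\<^sub>0\<close>. Dominated convergence makes the law of this limit the weak limit of the laws of
  \<open>Y\<^sub>k\<close>, and weak limits are unique because a Borel probability measure concentrated on \<open>S\<close>
  is determined by the integrals over \<open>S\<close> of bounded continuous functions.
\<close>

section \<open>Supports of nonnegative matrices and synchronizing words\<close>

definition nonneg_mat :: "real^'n^'m \<Rightarrow> bool" where
  "nonneg_mat M \<longleftrightarrow> (\<forall>i j. 0 \<le> M $ i $ j)"

definition mat_support :: "real^'n^'m \<Rightarrow> ('m \<times> 'n) set" where
  "mat_support M = {(i, j). 0 < M $ i $ j}"

lemma nonneg_mat_one: "nonneg_mat (mat 1 :: real^'n^'n)"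
  by (simp add: nonneg_mat_def mat_def)

lemma nonneg_mat_mult:
  fixes A :: "real^'k::finite^'m" and B :: "real^'n^'k"
  shows "nonneg_mat A \<Longrightarrow> nonneg_mat B \<Longrightarrow> nonneg_mat (A ** B)"
  by (auto simp: nonneg_mat_def matrix_matrix_mult_def intro!: sum_nonneg)

lemma mat_support_one: "mat_support (mat 1 :: real^'n^'n) = Id"
  by (auto simp: mat_support_def mat_def)

lemma sum_pos_iff_nonneg:
  fixes f :: "'a \<Rightarrow> real"
  assumes "finite S" "\<And>x. x \<in> S \<Longrightarrow> 0 \<le> f x"
  shows "0 < sum f S \<longleftrightarrow> (\<exists>x\<in>S. 0 < f x)"
proof -
  have "0 \<le> sum f S" using assms(2) by (rule sum_nonneg)
  then show ?thesis using sum_nonneg_eq_0_iff[OF assms] assms(2) by (auto simp: less_le)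
qed

lemma mat_support_mult:
  fixes A :: "real^'k::finite^'m" and B :: "real^'n^'k"
  assumes "nonneg_mat A" "nonneg_mat B"
  shows "mat_support (A ** B) = mat_support A O mat_support B"
proof -
  have "0 < (A ** B) $ i $ j \<longleftrightarrow> (\<exists>k. 0 < A $ i $ k \<and> 0 < B $ k $ j)" for i j
    using assms unfolding nonneg_mat_def matrix_matrix_mult_def
    by (simp add: sum_pos_iff_nonneg zero_less_mult_iff)
       (meson less_le_not_le)
  then show ?thesis by (auto simp: mat_support_def)
qed

definition mat_word :: "('a \<Rightarrow> real^'n^'n) \<Rightarrow> 'a list \<Rightarrow> real^'n^'n" where
  "mat_word A ws = foldr (\<lambda>a M. A a ** M) ws (mat 1)"

lemma mat_word_Nil [simp]: "mat_word A [] = mat 1"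
  and mat_word_Cons [simp]: "mat_word A (a # ws) = A a ** mat_word A ws"
  by (simp_all add: mat_word_def)

lemma mat_word_append: "mat_word A (ws @ vs) = mat_word A ws ** mat_word A vs"
  by (induction ws) (simp_all add: matrix_mul_assoc)

lemma nonneg_mat_word: "(\<And>a. nonneg_mat (A a)) \<Longrightarrow> nonneg_mat (mat_word A ws)"
  by (induction ws) (simp_all add: nonneg_mat_one nonneg_mat_mult)

text \<open>\<open>update_rel G u\<close> is the support of a matrix that replaces coordinate \<open>u\<close> by a positive
  combination of the coordinates of its \<open>G\<close>-neighbours and keeps the other coordinates.\<close>

definition update_rel :: "'a rel \<Rightarrow> 'a \<Rightarrow> 'a rel" where
  "update_rel G u = {(r, j). if r = u then (u, j) \<in> G else j = r}"

definition update_word_rel :: "'a rel \<Rightarrow> 'a list \<Rightarrow> 'a rel" where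
  "update_word_rel G ws = foldr (\<lambda>u R. update_rel G u O R) ws Id"

lemma update_word_rel_Nil [simp]: "update_word_rel G [] = Id"
  and update_word_rel_Cons [simp]: "update_word_rel G (u # ws) = update_rel G u O update_word_rel G ws"
  by (simp_all add: update_word_rel_def)

lemma update_word_rel_append:
  "update_word_rel G (ws @ vs) = update_word_rel G ws O update_word_rel G vs"
  by (induction ws) (simp_all add: O_assoc)

lemma update_rel_Image:
  "update_rel G u `` S = (if u \<in> S then (S - {u}) \<union> G `` {u} else S)"
  by (auto simp: update_rel_def split: if_splits)

lemma update_word_rel_Image_append:
  "update_word_rel G (ws @ vs) `` S = update_word_rel G vs `` (update_word_rel G ws `` S)"
  by (simp add: update_word_rel_append relcomp_Image)

lemma update_word_rel_Image_snoc:
  "update_word_rel G (ws @ [v]) `` S = update_rel G v `` (update_word_rel G ws `` S)"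
  by (simp add: update_word_rel_Image_append relcomp_Image)

lemma update_word_rel_Image_mono:
  "S \<subseteq> S' \<Longrightarrow> update_word_rel G ws `` S \<subseteq> update_word_rel G ws `` S'"
  by (rule Image_mono) simp_all

lemma update_word_rel_Image_nonempty:
  assumes "\<And>u. G `` {u} \<noteq> {}" "S \<noteq> {}"
  shows "update_word_rel G ws `` S \<noteq> {}"
  using assms(2)
proof (induction ws arbitrary: S)
  case (Cons u ws)
  have "update_rel G u `` S \<noteq> {}"
    using Cons.prems assms(1)[of u] by (cases "u \<in> S") (auto simp: update_rel_Image)
  then show ?case using Cons.IH by (simp add: relcomp_Image)
qed simp

lemma update_rel_Image_Diff:
  "v \<in> S' \<Longrightarrow> update_rel G v `` S - update_rel G v `` S' \<subseteq> S - S'"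
  by (auto simp: update_rel_Image)

lemma update_rel_Image_neighbours: "v \<in> S' \<Longrightarrow> G `` {v} \<subseteq> update_rel G v `` S'"
  by (simp add: update_rel_Image)

lemma update_word_reaches:
  assumes "(y, z) \<in> G\<^sup>+" "y \<in> Y"
  shows "\<exists>ws. update_word_rel G ws `` X - update_word_rel G ws `` Y \<subseteq> X - Y
              \<and> z \<in> update_word_rel G ws `` Y"
  using assms(1)
proof (induction rule: trancl_induct)
  case (base z)
  have "update_rel G y `` X - update_rel G y `` Y \<subseteq> X - Y" "z \<in> update_rel G y `` Y"
    using update_rel_Image_Diff[of y Y G X] update_rel_Image_neighbours[of y Y G] assms(2) base
    by auto
  then show ?case by (intro exI[of _ "[y]"]) (simp add: relcomp_Image)
next
  case (step v z)
  then obtain ws where ws: "update_word_rel G ws `` X - update_word_rel G ws `` Y \<subseteq> X - Y"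
    "v \<in> update_word_rel G ws `` Y" by blast
  have "update_word_rel G (ws @ [v]) `` X - update_word_rel G (ws @ [v]) `` Y \<subseteq> X - Y"
    using order_trans[OF update_rel_Image_Diff[OF ws(2), where G = G] ws(1)]
    by (simp add: update_word_rel_Image_snoc)
  moreover have "z \<in> update_word_rel G (ws @ [v]) `` Y"
    using update_rel_Image_neighbours[OF ws(2)] step.hyps(2)
    by (auto simp: update_word_rel_Image_snoc)
  ultimately show ?case by blast
qed

lemma update_word_absorbs:
  fixes X Y :: "'a::finite set"
  assumes strong: "\<And>i j. (i, j) \<in> G\<^sup>+" and "Y \<noteq> {}"
  shows "\<exists>ws. update_word_rel G ws `` X \<subseteq> update_word_rel G ws `` Y"
  using assms(2)
proof (induction "card (X - Y)" arbitrary: X Y rule: less_induct)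
  case less
  show ?case
  proof (cases "X \<subseteq> Y")
    case True
    then show ?thesis by (intro exI[of _ "[]"]) auto
  next
    case False
    then obtain z where z: "z \<in> X" "z \<notin> Y" by blast
    obtain y where y: "y \<in> Y" using less.prems by blast
    obtain ws where ws: "update_word_rel G ws `` X - update_word_rel G ws `` Y \<subseteq> X - Y"
      "z \<in> update_word_rel G ws `` Y"
      using update_word_reaches[OF strong y] by blast
    have "card (update_word_rel G ws `` X - update_word_rel G ws `` Y) \<le> card (X - Y - {z})"
      using ws by (intro card_mono) auto
    also have "\<dots> < card (X - Y)"
      using z by (intro card_Diff1_less) auto
    finally have "card (update_word_rel G ws `` X - update_word_rel G ws `` Y) < card (X - Y)" .
    moreover have "update_word_rel G ws `` Y \<noteq> {}" using ws(2) by blast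
    ultimately obtain vs where
      "update_word_rel G vs `` (update_word_rel G ws `` X)
        \<subseteq> update_word_rel G vs `` (update_word_rel G ws `` Y)"
      by (blast dest: less.hyps)
    then show ?thesis by (intro exI[of _ "ws @ vs"]) (simp add: update_word_rel_Image_append)
  qed
qed

lemma out_neighbour_if_strongly_connected:
  assumes "\<And>i j. (i, j) \<in> G\<^sup>+"
  shows "G `` {u} \<noteq> {}"
  using tranclD[OF assms[of u u]] by blast

lemma update_word_merges_finite:
  fixes G :: "'a::finite rel"
  assumes strong: "\<And>i j. (i, j) \<in> G\<^sup>+" and "finite F"
  shows "\<exists>ws. \<forall>r\<in>F. update_word_rel G ws `` UNIV \<subseteq> update_word_rel G ws `` {r}"
  using assms(2)
proof (induction F rule: finite_induct)
  case empty
  show ?case by simp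
next
  case (insert r F)
  then obtain ws where ws:
    "\<And>r. r \<in> F \<Longrightarrow> update_word_rel G ws `` UNIV \<subseteq> update_word_rel G ws `` {r}"
    by blast
  have "update_word_rel G ws `` {r} \<noteq> {}"
    using out_neighbour_if_strongly_connected[OF strong] by (rule update_word_rel_Image_nonempty) simp
  then obtain vs where vs: "update_word_rel G vs `` (update_word_rel G ws `` UNIV)
      \<subseteq> update_word_rel G vs `` (update_word_rel G ws `` {r})"
    using update_word_absorbs[OF strong] by blast
  have "update_word_rel G (ws @ vs) `` UNIV \<subseteq> update_word_rel G (ws @ vs) `` {r'}"
    if "r' \<in> insert r F" for r'
  proof (cases "r' = r")
    case True
    then show ?thesis using vs by (simp add: update_word_rel_Image_append)
  next
    case False
    then have "r' \<in> F" using that by simp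
    then show ?thesis
      unfolding update_word_rel_Image_append by (intro update_word_rel_Image_mono ws)
  qed
  then show ?case by blast
qed

theorem synchronizing_update_word:
  fixes G :: "'a::finite rel"
  assumes strong: "\<And>i j. (i, j) \<in> G\<^sup>+"
  shows "\<exists>ws T. T \<noteq> {} \<and> (\<forall>r. update_word_rel G ws `` {r} = T)"
proof -
  obtain ws where ws: "\<And>r. update_word_rel G ws `` UNIV \<subseteq> update_word_rel G ws `` {r}"
    using update_word_merges_finite[OF strong, of UNIV] by auto
  have "update_word_rel G ws `` {r} = update_word_rel G ws `` UNIV" for r
    using ws[of r] update_word_rel_Image_mono[of "{r}" UNIV G ws] by simp
  moreover have "update_word_rel G ws `` UNIV \<noteq> {}"
    using out_neighbour_if_strongly_connected[OF strong] by (rule update_word_rel_Image_nonempty) simp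
  ultimately show ?thesis by blast
qed

section \<open>Positive vectors and ratio closeness\<close>

definition pos_vec :: "real^'n \<Rightarrow> bool" where
  "pos_vec x \<longleftrightarrow> (\<forall>i. 0 < x $ i)"

lemma pos_vec_one: "pos_vec 1"
  by (simp add: pos_vec_def)

lemma pos_vec_nonzero: "pos_vec x \<Longrightarrow> x \<noteq> 0"
  by (auto simp: pos_vec_def)

lemma pos_vec_sgn: "pos_vec x \<Longrightarrow> pos_vec (sgn x)"
  using pos_vec_nonzero[of x] by (simp add: pos_vec_def sgn_div_norm)

lemma pos_vec_mult_vec:
  assumes "nonneg_mat M" "\<And>r. \<exists>j. 0 < M $ r $ j" "pos_vec v"
  shows "pos_vec (M *v v)"
  unfolding pos_vec_def
proof
  fix r
  obtain j where "0 < M $ r $ j" using assms(2) by blast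
  then have "0 < M $ r $ j * v $ j" using assms(3) by (simp add: pos_vec_def)
  also have "\<dots> \<le> (\<Sum>k\<in>UNIV. M $ r $ k * v $ k)"
    using assms(1,3)
    by (intro member_le_sum mult_nonneg_nonneg) (auto simp: pos_vec_def nonneg_mat_def less_imp_le)
  also have "\<dots> = (M *v v) $ r" by (simp add: matrix_vector_mult_def)
  finally show "0 < (M *v v) $ r" .
qed

text \<open>For positive vectors, \<open>ratio_close d x y\<close> says that the Hilbert projective distance
  between \<open>x\<close> and \<open>y\<close> is at most \<open>ln (1 + d)\<close>.\<close>

definition ratio_close :: "real \<Rightarrow> real^'n \<Rightarrow> real^'n \<Rightarrow> bool" where
  "ratio_close d x y \<longleftrightarrow> (\<exists>a>0. \<forall>i. a * y $ i \<le> x $ i \<and> x $ i \<le> a * (1 + d) * y $ i)"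

lemma ratio_close_scaleR:
  assumes "ratio_close d x y" "0 < s" "0 < t"
  shows "ratio_close d (s *\<^sub>R x) (t *\<^sub>R y)"
proof -
  obtain a where a: "0 < a" "\<And>i. a * y $ i \<le> x $ i" "\<And>i. x $ i \<le> a * (1 + d) * y $ i"
    using assms(1) by (auto simp: ratio_close_def)
  have "a * s / t * (t *\<^sub>R y) $ i \<le> (s *\<^sub>R x) $ i" for i
  proof -
    have "a * s / t * (t *\<^sub>R y) $ i = s * (a * y $ i)" using assms(3) by simp
    also have "\<dots> \<le> s * x $ i" using a(2) assms(2) by (simp add: mult_left_mono)
    finally show ?thesis by simp
  qed
  moreover have "(s *\<^sub>R x) $ i \<le> a * s / t * (1 + d) * (t *\<^sub>R y) $ i" for i
  proof -
    have "(s *\<^sub>R x) $ i \<le> s * (a * (1 + d) * y $ i)" using a(3) assms(2) by (simp add: mult_left_mono)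
    also have "\<dots> = a * s / t * (1 + d) * (t *\<^sub>R y) $ i" using assms(3) by simp
    finally show ?thesis .
  qed
  ultimately show ?thesis
    using a(1) assms(2,3) unfolding ratio_close_def by (intro exI[of _ "a * s / t"]) simp
qed

lemma ratio_close_sgn: "ratio_close d x y \<Longrightarrow> x \<noteq> 0 \<Longrightarrow> y \<noteq> 0 \<Longrightarrow> ratio_close d (sgn x) (sgn y)"
  unfolding sgn_div_norm by (rule ratio_close_scaleR) auto

lemma nonneg_mat_mult_vec_mono:
  assumes "nonneg_mat M" "\<And>j. x $ j \<le> x' $ j"
  shows "(M *v x) $ r \<le> (M *v x') $ r"
  using assms unfolding nonneg_mat_def matrix_vector_mult_def
  by (auto intro!: sum_mono mult_left_mono)

lemma ratio_close_mult_vec: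
  assumes "nonneg_mat M" "ratio_close d x y"
  shows "ratio_close d (M *v x) (M *v y)"
proof -
  obtain a where a: "0 < a" "\<And>i. a * y $ i \<le> x $ i" "\<And>i. x $ i \<le> a * (1 + d) * y $ i"
    using assms(2) by (auto simp: ratio_close_def)
  have "(M *v (a *\<^sub>R y)) $ r \<le> (M *v x) $ r" "(M *v x) $ r \<le> (M *v ((a * (1 + d)) *\<^sub>R y)) $ r" for r
    using a by (auto intro!: nonneg_mat_mult_vec_mono assms(1))
  then show ?thesis
    using a(1) unfolding ratio_close_def matrix_vector_mult_scaleR
    by (intro exI[of _ a]) (simp add: mult.assoc)
qed

lemma ratio_close_if_ratios_bounded:
  assumes x: "pos_vec x" and y: "pos_vec y"
    and bound: "\<And>r l. x $ r / y $ r \<le> (1 + d) * (x $ l / y $ l)"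
  shows "ratio_close d x y"
proof -
  have "Min (range (\<lambda>i. x $ i / y $ i)) \<in> range (\<lambda>i. x $ i / y $ i)"
    by (rule Min_in) auto
  then obtain l where l: "x $ l / y $ l = Min (range (\<lambda>i. x $ i / y $ i))"
    by (metis (no_types, lifting) imageE)
  show ?thesis unfolding ratio_close_def
  proof (intro exI[of _ "x $ l / y $ l"] conjI allI)
    show "0 < x $ l / y $ l" using x y by (simp add: pos_vec_def)
    fix r
    have "x $ l / y $ l \<le> x $ r / y $ r" unfolding l by (rule Min_le) auto
    then show "x $ l / y $ l * y $ r \<le> x $ r"
      using y by (simp add: pos_vec_def pos_le_divide_eq)
    show "x $ r \<le> x $ l / y $ l * (1 + d) * y $ r"
      using bound[of r l] y by (simp add: pos_vec_def pos_divide_le_eq mult_ac)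
  qed
qed

lemma ratio_close_unit_vectors:
  assumes x: "pos_vec x" "norm x = 1" and y: "pos_vec y" "norm y = 1"
    and "ratio_close d x y"
  shows "norm (x - y) \<le> d" and "\<And>i. y $ i \<le> (1 + d) * x $ i"
proof -
  obtain a where a: "0 < a" "\<And>i. a * y $ i \<le> x $ i" "\<And>i. x $ i \<le> a * (1 + d) * y $ i"
    using assms(5) by (auto simp: ratio_close_def)
  have xpos: "0 < x $ i" and ypos: "0 < y $ i" for i
    using x y by (simp_all add: pos_vec_def)
  have "norm (a *\<^sub>R y) \<le> norm x"
    using a(1,2) xpos ypos by (intro norm_le_componentwise_cart) (simp add: abs_of_pos)
  then have a_le: "a \<le> 1" using a(1) x y by simp
  have b_pos: "0 < a * (1 + d)"
    using less_le_trans[OF xpos a(3)] ypos zero_less_mult_pos2 by blast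
  have "norm x \<le> norm ((a * (1 + d)) *\<^sub>R y)"
    using a(3) xpos b_pos ypos by (intro norm_le_componentwise_cart) (simp add: abs_of_pos)
  then have b_ge: "1 \<le> a * (1 + d)" using x y b_pos by simp
  have "0 \<le> a * d" using a_le b_ge by (simp add: algebra_simps)
  then have d: "0 \<le> d" using a(1) by (simp add: zero_le_mult_iff)
  have "\<bar>(x - y) $ i\<bar> \<le> (a * d) * y $ i" for i
  proof -
    have "a * y $ i \<le> y $ i" "y $ i \<le> a * (1 + d) * y $ i"
      using a_le b_ge ypos[of i] by (simp_all add: mult_le_cancel_right1)
    then have "\<bar>x $ i - y $ i\<bar> \<le> a * (1 + d) * y $ i - a * y $ i"
      using a(2,3)[of i] by linarith
    then show ?thesis by (simp add: algebra_simps)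
  qed
  then have "norm (x - y) \<le> norm ((a * d) *\<^sub>R y)"
    using a(1) d ypos by (intro norm_le_componentwise_cart) (simp add: abs_mult abs_of_pos)
  also have "\<dots> \<le> d" using y a(1) a_le d by (simp add: mult_left_le_one_le)
  finally show "norm (x - y) \<le> d" .
  fix i
  have "y $ i \<le> (a * (1 + d)) * y $ i" using b_ge ypos[of i] by simp
  also have "\<dots> = (1 + d) * (a * y $ i)" by simp
  also have "\<dots> \<le> (1 + d) * x $ i" using a(2)[of i] d by (simp add: mult_left_mono)
  finally show "y $ i \<le> (1 + d) * x $ i" .
qed

section \<open>Birkhoff contraction for matrices with comparable rows\<close>

locale comparable_rows =
  fixes M :: "real^'n::finite^'n" and \<kappa> :: real
  assumes nonneg: "nonneg_mat M" and kappa_pos: "0 < \<kappa>"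
    and comparable: "\<And>r l j. \<kappa> * M $ l $ j \<le> M $ r $ j"
    and nonzero: "M \<noteq> 0"
begin

lemma positive_entry: obtains l j where "0 < M $ l $ j"
  using nonzero nonneg unfolding nonneg_mat_def
  by (metis less_eq_real_def vec_eq_iff zero_index)

lemma kappa_le_one: "\<kappa> \<le> 1"
  using positive_entry comparable by (metis mult_le_cancel_right2)

lemma contraction_factor_bounds: "0 \<le> 1 - \<kappa>\<^sup>2" "1 - \<kappa>\<^sup>2 < 1" "0 \<le> 1 / \<kappa>\<^sup>2 - 1"
  using kappa_pos kappa_le_one by (simp_all add: power_le_one le_divide_eq)

lemma pos_vec_mult: "pos_vec v \<Longrightarrow> pos_vec (M *v v)"
proof (rule pos_vec_mult_vec[OF nonneg])
  obtain l j where "0 < M $ l $ j" by (rule positive_entry)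
  then show "\<exists>j. 0 < M $ r $ j" for r
    using comparable[of l j r] kappa_pos by (metis less_le_trans mult_pos_pos)
qed

lemma comparable_mult_vec: "(\<And>j. 0 \<le> z $ j) \<Longrightarrow> \<kappa> * (M *v z) $ l \<le> (M *v z) $ r"
  unfolding matrix_vector_mult_def
  by (simp add: sum_distrib_left mult.assoc[symmetric])
     (intro sum_mono mult_right_mono comparable)

lemma comparable_ratio:
  assumes z: "\<And>j. 0 \<le> z $ j" and y: "pos_vec y"
  shows "\<kappa>\<^sup>2 * ((M *v z) $ l / (M *v y) $ l) \<le> (M *v z) $ r / (M *v y) $ r"
proof -
  have My: "0 < (M *v y) $ i" for i using pos_vec_mult[OF y] by (simp add: pos_vec_def)
  have "0 \<le> (M *v z) $ i" for i
    using nonneg_mat_mult_vec_mono[OF nonneg, of 0 z] z by simp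
  then have "(\<kappa> * (M *v z) $ l) * (\<kappa> * (M *v y) $ r) \<le> (M *v z) $ r * (M *v y) $ l"
    using kappa_pos My y
    by (intro mult_mono comparable_mult_vec z) (auto simp: pos_vec_def less_imp_le)
  then show ?thesis using My by (simp add: field_simps power2_eq_square)
qed

theorem ratio_close_image:
  assumes "pos_vec x" "pos_vec y"
  shows "ratio_close (1 / \<kappa>\<^sup>2 - 1) (M *v x) (M *v y)"
proof (rule ratio_close_if_ratios_bounded[OF pos_vec_mult[OF assms(1)] pos_vec_mult[OF assms(2)]])
  fix r l
  have "\<kappa>\<^sup>2 * ((M *v x) $ r / (M *v y) $ r) \<le> (M *v x) $ l / (M *v y) $ l"
    using assms by (intro comparable_ratio) (auto simp: pos_vec_def less_imp_le)
  moreover have "p \<le> (1 + (1 / \<kappa>\<^sup>2 - 1)) * q" if "\<kappa>\<^sup>2 * p \<le> q" for p q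
    using that kappa_pos by (simp add: pos_le_divide_eq mult.commute)
  ultimately show "(M *v x) $ r / (M *v y) $ r \<le> (1 + (1 / \<kappa>\<^sup>2 - 1)) * ((M *v x) $ l / (M *v y) $ l)"
    by blast
qed

lemma comparable_upper_gap:
  assumes y: "pos_vec y" and x: "\<And>i. x $ i \<le> b * y $ i"
  shows "\<kappa>\<^sup>2 * (b - (M *v x) $ l / (M *v y) $ l) \<le> b - (M *v x) $ r / (M *v y) $ r"
proof -
  have My: "0 < (M *v y) $ i" for i using pos_vec_mult[OF y] by (simp add: pos_vec_def)
  have "0 \<le> (b *\<^sub>R y - x) $ j" for j using x[of j] by simp
  then have "\<kappa>\<^sup>2 * ((M *v (b *\<^sub>R y - x)) $ l / (M *v y) $ l) \<le> (M *v (b *\<^sub>R y - x)) $ r / (M *v y) $ r"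
    using y by (rule comparable_ratio)
  moreover have "(M *v (b *\<^sub>R y - x)) $ i / (M *v y) $ i = b - (M *v x) $ i / (M *v y) $ i" for i
    using My[of i] by (simp add: matrix_vector_mult_diff_distrib matrix_vector_mult_scaleR field_simps)
  ultimately show ?thesis by simp
qed

text \<open>Birkhoff's argument: with \<open>b = a (1 + d)\<close>, all ratios \<open>\<rho> i\<close> lie in \<open>[a, b]\<close>, and the
  gaps \<open>b - \<rho> i\<close>, being the ratios for the nonnegative vector \<open>b y - x\<close>, agree up to the
  factor \<open>\<kappa>\<^sup>2\<close>.\<close>

theorem ratio_close_contract:
  assumes x: "pos_vec x" and y: "pos_vec y" and "ratio_close d x y"
  shows "ratio_close ((1 - \<kappa>\<^sup>2) * d) (M *v x) (M *v y)"
proof -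
  obtain a where a: "0 < a" "\<And>i. a * y $ i \<le> x $ i" "\<And>i. x $ i \<le> a * (1 + d) * y $ i"
    using assms(3) by (auto simp: ratio_close_def)
  define \<rho> where "\<rho> i = (M *v x) $ i / (M *v y) $ i" for i
  have My: "0 < (M *v y) $ i" for i using pos_vec_mult[OF y] by (simp add: pos_vec_def)
  show ?thesis
  proof (rule ratio_close_if_ratios_bounded[OF pos_vec_mult[OF x] pos_vec_mult[OF y]])
    fix r l
    have "(M *v (a *\<^sub>R y)) $ l \<le> (M *v x) $ l" "(M *v x) $ l \<le> (M *v ((a * (1 + d)) *\<^sub>R y)) $ l"
      using a by (auto intro!: nonneg_mat_mult_vec_mono nonneg)
    then have low: "a \<le> \<rho> l" and up: "\<rho> l \<le> a * (1 + d)"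
      using My[of l] by (simp_all add: \<rho>_def matrix_vector_mult_scaleR pos_le_divide_eq pos_divide_le_eq)
    then have "a * 1 \<le> a * (1 + d)" by linarith
    then have "0 \<le> 1 + d" using a(1) by (simp add: mult_le_cancel_left_pos)
    then have "(1 + d) * a \<le> (1 + d) * \<rho> l" using low by (rule mult_left_mono[rotated])
    then have gap: "a * (1 + d) - \<rho> l \<le> d * \<rho> l" by (simp add: algebra_simps)
    have "\<kappa>\<^sup>2 * (a * (1 + d) - \<rho> l) \<le> a * (1 + d) - \<rho> r"
      unfolding \<rho>_def by (rule comparable_upper_gap[OF y a(3)])
    then have "\<rho> r \<le> \<rho> l + (1 - \<kappa>\<^sup>2) * (a * (1 + d) - \<rho> l)"
      by (simp add: algebra_simps)
    also have "\<dots> \<le> \<rho> l + (1 - \<kappa>\<^sup>2) * (d * \<rho> l)"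
      using gap contraction_factor_bounds(1) by (intro add_left_mono mult_left_mono)
    also have "\<dots> = (1 + (1 - \<kappa>\<^sup>2) * d) * \<rho> l"
      by (simp add: algebra_simps)
    finally show "(M *v x) $ r / (M *v y) $ r \<le> (1 + (1 - \<kappa>\<^sup>2) * d) * ((M *v x) $ l / (M *v y) $ l)"
      by (simp only: \<rho>_def)
  qed
qed

end

lemma comparable_rows_if_common_support:
  fixes M :: "real^'n::finite^'n"
  assumes nonneg: "nonneg_mat M" and T: "T \<noteq> {}" and supp: "\<And>r. mat_support M `` {r} = T"
  shows "\<exists>\<kappa>. comparable_rows M \<kappa>"
proof -
  have pos_iff: "0 < M $ r $ j \<longleftrightarrow> j \<in> T" for r j
    using supp[of r] by (auto simp: mat_support_def)
  define C where "C = (\<lambda>(r, j). M $ r $ j) ` (UNIV \<times> T)"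
  have C: "finite C" "C \<noteq> {}" "\<And>c. c \<in> C \<Longrightarrow> 0 < c"
    using T pos_iff by (auto simp: C_def)
  have "0 < Min C" "0 < Max C" using C by simp_all
  moreover have "Min C / Max C * M $ l $ j \<le> M $ r $ j" for r l j
  proof (cases "j \<in> T")
    case True
    then have "M $ l $ j \<le> Max C" "Min C \<le> M $ r $ j"
      using C by (auto simp: C_def intro!: Max_ge Min_le)
    then have "Min C * M $ l $ j \<le> M $ r $ j * Max C"
      using \<open>0 < Min C\<close> nonneg by (intro mult_mono) (auto simp: nonneg_mat_def)
    with \<open>0 < Max C\<close> show ?thesis
      by (simp add: field_simps mult.commute)
  next
    case False
    have "M $ i $ j = 0" for i
      using False pos_iff[of i j] nonneg unfolding nonneg_mat_def by (metis less_eq_real_def)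
    then show ?thesis by simp
  qed
  moreover obtain j where "j \<in> T" using T by blast
  then have "M \<noteq> 0" using pos_iff by (metis less_irrefl vec_lambda_unique zero_index)
  ultimately show ?thesis
    using nonneg by (intro exI[of _ "Min C / Max C"]) (unfold_locales, auto)
qed

section \<open>Backward products along a stream\<close>

definition block :: "nat \<Rightarrow> nat \<Rightarrow> 'a stream \<Rightarrow> 'a list" where
  "block L j \<omega> = stake L (sdrop (j * L) \<omega>)"

lemma stake_Suc_mult: "stake (Suc j * L) \<omega> = stake (j * L) \<omega> @ block L j \<omega>"
  by (simp add: block_def stake_add add.commute)

lemma block_sdrop: "block L j (sdrop (n * L) \<omega>) = block L (n + j) \<omega>"
  by (simp add: block_def sdrop_add add_mult_distrib)

locale block_contraction =
  fixes A :: "'a \<Rightarrow> real^'n::finite^'n" and w :: "'a list" and \<kappa> :: real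
  assumes nonneg_A: "\<And>a. nonneg_mat (A a)"
    and pos_vec_A: "\<And>a v. pos_vec v \<Longrightarrow> pos_vec (A a *v v)"
    and comparable_rows_w: "comparable_rows (mat_word A w) \<kappa>"
begin

interpretation W: comparable_rows "mat_word A w" \<kappa>
  by (rule comparable_rows_w)

abbreviation L :: nat where "L \<equiv> length w"

primrec hits :: "'a stream \<Rightarrow> nat \<Rightarrow> nat" where
  "hits \<omega> 0 = 0"
| "hits \<omega> (Suc j) = hits \<omega> j + (if block L j \<omega> = w then 1 else 0)"

text \<open>After the first aligned block equal to \<open>w\<close> any two positive vectors are
  \<open>(1 / \<kappa>\<^sup>2 - 1)\<close>-close, and each further such block contracts by \<open>1 - \<kappa>\<^sup>2\<close>.\<close>

definition tail_bound :: "'a stream \<Rightarrow> nat \<Rightarrow> real" where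
  "tail_bound \<omega> j = (1 / \<kappa>\<^sup>2 - 1) * (1 - \<kappa>\<^sup>2) ^ (hits \<omega> j - 1)"

definition backward :: "real^'n \<Rightarrow> 'a stream \<Rightarrow> nat \<Rightarrow> real^'n" where
  "backward y \<omega> k = sgn (mat_word A (stake k \<omega>) *v y)"

lemma pos_vec_mat_word: "pos_vec v \<Longrightarrow> pos_vec (mat_word A ws *v v)"
  by (induction ws) (simp_all add: pos_vec_A flip: matrix_vector_mul_assoc)

lemma mat_word_stake_Suc_mult:
  "mat_word A (stake (Suc j * L) \<omega>) *v v = mat_word A (stake (j * L) \<omega>) *v (mat_word A (block L j \<omega>) *v v)"
  by (simp only: stake_Suc_mult mat_word_append matrix_vector_mul_assoc)

lemma ratio_close_blocks:
  assumes "pos_vec x" "pos_vec y" "ratio_close d x y"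
  shows "ratio_close (d * (1 - \<kappa>\<^sup>2) ^ hits \<omega> j)
           (mat_word A (stake (j * L) \<omega>) *v x) (mat_word A (stake (j * L) \<omega>) *v y)"
  using assms
proof (induction j arbitrary: x y d)
  case (Suc j)
  let ?B = "mat_word A (block L j \<omega>)"
  have pos: "pos_vec (?B *v x)" "pos_vec (?B *v y)"
    using Suc.prems by (simp_all add: pos_vec_mat_word)
  show ?case
  proof (cases "block L j \<omega> = w")
    case True
    then have "ratio_close (d * (1 - \<kappa>\<^sup>2)) (?B *v x) (?B *v y)"
      using W.ratio_close_contract[OF Suc.prems] by (simp add: mult.commute)
    from Suc.IH[OF pos this] True show ?thesis
      unfolding mat_word_stake_Suc_mult by (simp add: mult.assoc)
  next
    case False
    have "ratio_close d (?B *v x) (?B *v y)"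
      using Suc.prems(3) by (intro ratio_close_mult_vec nonneg_mat_word nonneg_A)
    from Suc.IH[OF pos this] False show ?thesis
      unfolding mat_word_stake_Suc_mult by simp
  qed
qed simp

lemma ratio_close_after_hit:
  assumes "pos_vec x" "pos_vec y" "1 \<le> hits \<omega> j"
  shows "ratio_close (tail_bound \<omega> j)
           (mat_word A (stake (j * L) \<omega>) *v x) (mat_word A (stake (j * L) \<omega>) *v y)"
  using assms
proof (induction j arbitrary: x y)
  case (Suc j)
  let ?B = "mat_word A (block L j \<omega>)"
  have pos: "pos_vec (?B *v x)" "pos_vec (?B *v y)"
    using Suc.prems by (simp_all add: pos_vec_mat_word)
  show ?case
  proof (cases "block L j \<omega> = w")
    case True
    then have "ratio_close (1 / \<kappa>\<^sup>2 - 1) (?B *v x) (?B *v y)"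
      using W.ratio_close_image[OF Suc.prems(1,2)] by simp
    from ratio_close_blocks[OF pos this] True show ?thesis
      unfolding mat_word_stake_Suc_mult by (simp add: tail_bound_def)
  next
    case False
    with Suc.IH[OF pos] Suc.prems(3) show ?thesis
      unfolding mat_word_stake_Suc_mult by (simp add: tail_bound_def)
  qed
qed simp

lemma tail_bound_le: "tail_bound \<omega> j \<le> 1 / \<kappa>\<^sup>2 - 1"
  unfolding tail_bound_def using W.contraction_factor_bounds
  by (intro mult_left_le power_le_one) simp_all

lemma backward_unit_pos: "pos_vec v \<Longrightarrow> pos_vec (backward v \<omega> m) \<and> norm (backward v \<omega> m) = 1"
  using pos_vec_mat_word[of v "stake m \<omega>"]
  by (simp add: backward_def pos_vec_sgn norm_sgn pos_vec_nonzero)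

lemma backward_tail_close:
  assumes y: "pos_vec y" "pos_vec y'" and "1 \<le> hits \<omega> j" "j * L \<le> k" "j * L \<le> k'"
  shows "norm (backward y \<omega> k - backward y' \<omega> k') \<le> tail_bound \<omega> j"
    and "\<And>i. backward y' \<omega> k' $ i \<le> (1 + tail_bound \<omega> j) * backward y \<omega> k $ i"
proof -
  define u where "u = mat_word A (stake (k - j * L) (sdrop (j * L) \<omega>)) *v y"
  define u' where "u' = mat_word A (stake (k' - j * L) (sdrop (j * L) \<omega>)) *v y'"
  have u: "pos_vec u" "pos_vec u'" using y by (simp_all add: u_def u'_def pos_vec_mat_word)
  have split: "stake m \<omega> = stake (j * L) \<omega> @ stake (m - j * L) (sdrop (j * L) \<omega>)"
    if "j * L \<le> m" for m
    using that by (metis stake_add le_add_diff_inverse)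
  have "mat_word A (stake k \<omega>) *v y = mat_word A (stake (j * L) \<omega>) *v u"
       "mat_word A (stake k' \<omega>) *v y' = mat_word A (stake (j * L) \<omega>) *v u'"
    unfolding u_def u'_def split[OF assms(4)] split[OF assms(5)]
    by (simp_all only: mat_word_append matrix_vector_mul_assoc)
  moreover have "ratio_close (tail_bound \<omega> j)
      (mat_word A (stake (j * L) \<omega>) *v u) (mat_word A (stake (j * L) \<omega>) *v u')"
    using u assms(3) by (rule ratio_close_after_hit)
  ultimately have "ratio_close (tail_bound \<omega> j) (backward y \<omega> k) (backward y' \<omega> k')"
    unfolding backward_def using u
    by (simp add: ratio_close_sgn pos_vec_nonzero pos_vec_mat_word)
  with backward_unit_pos[OF y(1)] backward_unit_pos[OF y(2)]
  show "norm (backward y \<omega> k - backward y' \<omega> k') \<le> tail_bound \<omega> j"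
    and "\<And>i. backward y' \<omega> k' $ i \<le> (1 + tail_bound \<omega> j) * backward y \<omega> k $ i"
    using ratio_close_unit_vectors by blast+
qed

lemma hits_mono: "j \<le> j' \<Longrightarrow> hits \<omega> j \<le> hits \<omega> j'"
  by (induction j' rule: dec_induct) auto

lemma hits_unbounded:
  assumes "\<exists>\<^sub>\<infinity>j. block L j \<omega> = w"
  shows "\<exists>j. c \<le> hits \<omega> j"
proof (induction c)
  case (Suc c)
  then obtain j where "c \<le> hits \<omega> j" by blast
  moreover obtain j' where "j < j'" "block L j' \<omega> = w"
    using assms by (auto simp: INFM_nat)
  ultimately have "Suc c \<le> hits \<omega> (Suc j')"
    using hits_mono[of j j' \<omega>] by simp
  then show ?case by blast
qed simp

lemma tail_bound_small:
  assumes "\<exists>\<^sub>\<infinity>j. block L j \<omega> = w" "0 < \<epsilon>"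
  shows "\<exists>j. 1 \<le> hits \<omega> j \<and> tail_bound \<omega> j < \<epsilon>"
proof -
  obtain n where n: "(1 - \<kappa>\<^sup>2) ^ n < \<epsilon> * \<kappa>\<^sup>2"
    using real_arch_pow_inv[of "\<epsilon> * \<kappa>\<^sup>2" "1 - \<kappa>\<^sup>2"] assms(2) W.kappa_pos
      W.contraction_factor_bounds(2) by auto
  obtain j where j: "Suc n \<le> hits \<omega> j" using hits_unbounded[OF assms(1)] by blast
  have "tail_bound \<omega> j \<le> (1 / \<kappa>\<^sup>2 - 1) * (1 - \<kappa>\<^sup>2) ^ n"
    unfolding tail_bound_def using j W.contraction_factor_bounds
    by (intro mult_left_mono power_decreasing) simp_all
  also have "\<dots> \<le> 1 / \<kappa>\<^sup>2 * (1 - \<kappa>\<^sup>2) ^ n"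
    using W.contraction_factor_bounds by (intro mult_right_mono) simp_all
  also have "\<dots> < \<epsilon>" using n W.kappa_pos by (simp add: field_simps)
  finally have "tail_bound \<omega> j < \<epsilon>" .
  moreover have "1 \<le> hits \<omega> j" using j by simp
  ultimately show ?thesis by blast
qed

lemma backward_Cauchy:
  assumes "\<exists>\<^sub>\<infinity>j. block L j \<omega> = w" "pos_vec y" "pos_vec y'" "0 < \<epsilon>"
  shows "\<exists>M. \<forall>k\<ge>M. \<forall>k'\<ge>M. norm (backward y \<omega> k - backward y' \<omega> k') < \<epsilon>"
proof -
  obtain j where j: "1 \<le> hits \<omega> j" "tail_bound \<omega> j < \<epsilon>"
    using tail_bound_small[OF assms(1,4)] by blast
  have "norm (backward y \<omega> k - backward y' \<omega> k') < \<epsilon>" if "j * L \<le> k" "j * L \<le> k'" for k k'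
    using backward_tail_close(1)[OF assms(2,3) j(1) that] j(2) by linarith
  then show ?thesis by blast
qed

definition backward_limit :: "'a stream \<Rightarrow> real^'n" where
  "backward_limit \<omega> = lim (backward 1 \<omega>)"

theorem backward_tendsto:
  assumes "\<exists>\<^sub>\<infinity>j. block L j \<omega> = w" "pos_vec y"
  shows "backward y \<omega> \<longlonglongrightarrow> backward_limit \<omega>"
proof -
  have "Cauchy (backward 1 \<omega>)"
  proof (rule CauchyI)
    fix \<epsilon> :: real assume "0 < \<epsilon>"
    then show "\<exists>M. \<forall>m\<ge>M. \<forall>n\<ge>M. norm (backward 1 \<omega> m - backward 1 \<omega> n) < \<epsilon>"
      by (rule backward_Cauchy[OF assms(1) pos_vec_one pos_vec_one])
  qed
  then have limit: "backward 1 \<omega> \<longlonglongrightarrow> backward_limit \<omega>"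
    unfolding backward_limit_def by (simp add: Cauchy_convergent_iff convergent_LIMSEQ_iff)
  have "(\<lambda>k. backward y \<omega> k - backward 1 \<omega> k) \<longlonglongrightarrow> 0"
  proof (rule LIMSEQ_I)
    fix r :: real assume "0 < r"
    then obtain M where "\<forall>k\<ge>M. \<forall>k'\<ge>M. norm (backward y \<omega> k - backward 1 \<omega> k') < r"
      using backward_Cauchy[OF assms pos_vec_one] by blast
    then show "\<exists>M. \<forall>k\<ge>M. norm (backward y \<omega> k - backward 1 \<omega> k - 0) < r" by auto
  qed
  from tendsto_add[OF this limit] show ?thesis by simp
qed

lemma backward_bounded_below:
  assumes "1 \<le> hits \<omega> j" "j * L \<le> k"
  shows "\<kappa>\<^sup>2 * backward 1 \<omega> (j * L) $ i \<le> backward 1 \<omega> k $ i"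
proof -
  have "backward 1 \<omega> (j * L) $ i \<le> (1 + tail_bound \<omega> j) * backward 1 \<omega> k $ i"
    using backward_tail_close(2)[OF pos_vec_one pos_vec_one assms order.refl] .
  also have "\<dots> \<le> (1 / \<kappa>\<^sup>2) * backward 1 \<omega> k $ i"
    using tail_bound_le[of \<omega> j] backward_unit_pos[OF pos_vec_one, of \<omega> k]
    by (intro mult_right_mono) (auto simp: pos_vec_def less_imp_le)
  finally have "\<kappa>\<^sup>2 * backward 1 \<omega> (j * L) $ i \<le> \<kappa>\<^sup>2 * ((1 / \<kappa>\<^sup>2) * backward 1 \<omega> k $ i)"
    using W.kappa_pos by (intro mult_left_mono) simp_all
  then show ?thesis using W.kappa_pos by simp
qed

theorem backward_limit_in_Spos:
  assumes "\<exists>\<^sub>\<infinity>j. block L j \<omega> = w"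
  shows "backward_limit \<omega> \<in> Spos"
proof -
  have lim: "backward 1 \<omega> \<longlonglongrightarrow> backward_limit \<omega>"
    using assms pos_vec_one by (rule backward_tendsto)
  have "(\<lambda>k. norm (backward 1 \<omega> k)) \<longlonglongrightarrow> norm (backward_limit \<omega>)"
    using lim by (rule tendsto_norm)
  then have "norm (backward_limit \<omega>) = 1"
    using backward_unit_pos[OF pos_vec_one] by (simp add: LIMSEQ_const_iff)
  moreover have "0 < backward_limit \<omega> $ i" for i
  proof -
    obtain j where j: "1 \<le> hits \<omega> j" using hits_unbounded[OF assms] by blast
    have "\<kappa>\<^sup>2 * backward 1 \<omega> (j * L) $ i \<le> backward_limit \<omega> $ i"
      using backward_bounded_below[OF j]
      by (intro LIMSEQ_le_const[OF tendsto_vec_nth[OF lim]]) auto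
    moreover have "0 < \<kappa>\<^sup>2 * backward 1 \<omega> (j * L) $ i"
      using backward_unit_pos[OF pos_vec_one] W.kappa_pos by (simp add: pos_vec_def)
    ultimately show ?thesis by linarith
  qed
  ultimately show ?thesis by (simp add: Spos_def)
qed

end

section \<open>I.i.d. streams\<close>

lemma replicate_pmf_Suc_Cons:
  "replicate_pmf (Suc n) p = bind_pmf p (\<lambda>x. map_pmf ((#) x) (replicate_pmf n p))"
  by (simp add: map_pmf_def)

lemma replicate_pmf_Suc_snoc:
  "replicate_pmf (Suc n) p = bind_pmf (replicate_pmf n p) (\<lambda>xs. map_pmf (\<lambda>x. xs @ [x]) p)"
  using replicate_pmf_distrib[of n 1 p]
  by (simp add: bind_return_pmf bind_assoc_pmf map_pmf_def)

lemma map_pmf_rev_replicate_pmf: "map_pmf rev (replicate_pmf n p) = replicate_pmf n p"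
proof (induction n)
  case (Suc n)
  have "map_pmf rev (replicate_pmf (Suc n) p)
      = bind_pmf p (\<lambda>x. bind_pmf (map_pmf rev (replicate_pmf n p)) (\<lambda>xs. return_pmf (xs @ [x])))"
    by (simp add: map_pmf_def bind_assoc_pmf bind_return_pmf)
  also have "\<dots> = bind_pmf p (\<lambda>x. bind_pmf (replicate_pmf n p) (\<lambda>xs. return_pmf (xs @ [x])))"
    by (simp only: Suc.IH)
  also have "\<dots> = bind_pmf (replicate_pmf n p) (\<lambda>xs. bind_pmf p (\<lambda>x. return_pmf (xs @ [x])))"
    by (rule bind_commute_pmf)
  also have "\<dots> = replicate_pmf (Suc n) p"
    by (simp only: replicate_pmf_Suc_snoc map_pmf_def)
  finally show ?case .
qed simp

context
  fixes p :: "'a::countable pmf"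
begin

abbreviation iid_streams :: "'a stream measure" where
  "iid_streams \<equiv> stream_space (measure_pmf p)"

lemma prob_space_iid_streams: "prob_space iid_streams"
  by (rule prob_space.prob_space_stream_space) (rule prob_space_measure_pmf)

lemma measurable_stake_iid_streams [measurable]: "stake k \<in> measurable iid_streams (count_space UNIV)"
proof -
  have "sets iid_streams = sets (stream_space (count_space UNIV))"
    by (rule sets_stream_space_cong) simp
  then show ?thesis using measurable_stake measurable_cong_sets by blast
qed

lemma measurable_block_iid_streams [measurable]: "block L j \<in> measurable iid_streams (count_space UNIV)"
  unfolding block_def by measurable

lemma nn_integral_stake_sdrop:
  assumes [measurable]: "g \<in> borel_measurable iid_streams"
  shows "(\<integral>\<^sup>+\<omega>. f (stake k \<omega>) * g (sdrop k \<omega>) \<partial>iid_streams)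
       = (\<integral>\<^sup>+xs. f xs \<partial>replicate_pmf k p) * (\<integral>\<^sup>+\<omega>. g \<omega> \<partial>iid_streams)"
proof (induction k arbitrary: f)
  case 0
  then show ?case by (simp add: nn_integral_cmult)
next
  case (Suc k)
  have "(\<integral>\<^sup>+\<omega>. f (stake (Suc k) \<omega>) * g (sdrop (Suc k) \<omega>) \<partial>iid_streams)
      = (\<integral>\<^sup>+x. \<integral>\<^sup>+\<omega>. f (x # stake k \<omega>) * g (sdrop k \<omega>) \<partial>iid_streams \<partial>measure_pmf p)"
    by (subst prob_space.nn_integral_stream_space[OF prob_space_measure_pmf]) simp_all
  also have "\<dots> = (\<integral>\<^sup>+x. (\<integral>\<^sup>+xs. f (x # xs) \<partial>replicate_pmf k p) * (\<integral>\<^sup>+\<omega>. g \<omega> \<partial>iid_streams) \<partial>measure_pmf p)"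
  proof -
    have "(\<integral>\<^sup>+\<omega>. f (x # stake k \<omega>) * g (sdrop k \<omega>) \<partial>iid_streams)
        = (\<integral>\<^sup>+xs. f (x # xs) \<partial>replicate_pmf k p) * (\<integral>\<^sup>+\<omega>. g \<omega> \<partial>iid_streams)" for x
      using Suc.IH[of "\<lambda>xs. f (x # xs)"] by simp
    then show ?thesis by simp
  qed
  also have "\<dots> = (\<integral>\<^sup>+xs. f xs \<partial>replicate_pmf (Suc k) p) * (\<integral>\<^sup>+\<omega>. g \<omega> \<partial>iid_streams)"
    by (simp add: nn_integral_multc replicate_pmf_Suc_Cons)
  finally show ?case .
qed

lemma distr_stake: "distr iid_streams (count_space UNIV) (stake k) = measure_pmf (replicate_pmf k p)"
proof (rule measure_eqI)
  fix X assume "X \<in> sets (distr iid_streams (count_space UNIV) (stake k))"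
  have "emeasure (distr iid_streams (count_space UNIV) (stake k)) X
      = (\<integral>\<^sup>+x. indicator X x \<partial>distr iid_streams (count_space UNIV) (stake k))"
    by (rule nn_integral_indicator[symmetric]) simp
  also have "\<dots> = (\<integral>\<^sup>+\<omega>. indicator X (stake k \<omega>) \<partial>iid_streams)"
    by (rule nn_integral_distr) simp_all
  also have "\<dots> = (\<integral>\<^sup>+\<omega>. indicator X (stake k \<omega>) * 1 \<partial>iid_streams)"
    by simp
  also have "\<dots> = (\<integral>\<^sup>+xs. indicator X xs \<partial>replicate_pmf k p) * (\<integral>\<^sup>+\<omega>. 1 \<partial>iid_streams)"
    by (rule nn_integral_stake_sdrop) simp
  also have "\<dots> = emeasure (measure_pmf (replicate_pmf k p)) X"
    using prob_space.emeasure_space_1[OF prob_space_iid_streams] by (simp add: nn_integral_indicator)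
  finally show "emeasure (distr iid_streams (count_space UNIV) (stake k)) X
      = emeasure (measure_pmf (replicate_pmf k p)) X" .
qed simp

lemma integral_stake:
  fixes G :: "'a list \<Rightarrow> real"
  shows "(\<integral>\<omega>. G (stake k \<omega>) \<partial>iid_streams) = (\<integral>xs. G xs \<partial>replicate_pmf k p)"
proof -
  have "(\<integral>xs. G xs \<partial>distr iid_streams (count_space UNIV) (stake k)) = (\<integral>\<omega>. G (stake k \<omega>) \<partial>iid_streams)"
    by (rule integral_distr) simp_all
  then show ?thesis by (simp add: distr_stake)
qed

lemma emeasure_sdrop:
  assumes [measurable]: "Measurable.pred iid_streams P"
  shows "emeasure iid_streams {\<omega> \<in> space iid_streams. P (sdrop k \<omega>)} = emeasure iid_streams {\<omega> \<in> space iid_streams. P \<omega>}"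
proof -
  have "emeasure iid_streams {\<omega> \<in> space iid_streams. P (sdrop k \<omega>)} = (\<integral>\<^sup>+\<omega>. indicator {\<omega> \<in> space iid_streams. P (sdrop k \<omega>)} \<omega> \<partial>iid_streams)"
    by (rule nn_integral_indicator[symmetric]) measurable
  also have "\<dots> = (\<integral>\<^sup>+\<omega>. 1 * indicator {\<omega> \<in> space iid_streams. P \<omega>} (sdrop k \<omega>) \<partial>iid_streams)"
    by (intro nn_integral_cong) (simp add: space_stream_space split: split_indicator)
  also have "\<dots> = emeasure iid_streams {\<omega> \<in> space iid_streams. P \<omega>}"
    by (subst nn_integral_stake_sdrop) (simp_all add: nn_integral_indicator)
  finally show ?thesis .
qed

lemma emeasure_avoid_block:
  "emeasure iid_streams {\<omega> \<in> space iid_streams. \<forall>j<m. block L j \<omega> \<noteq> w}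
     = ennreal ((1 - pmf (replicate_pmf L p) w) ^ m)"
proof (induction m)
  case 0
  then show ?case by (simp add: prob_space.emeasure_space_1[OF prob_space_iid_streams])
next
  case (Suc m)
  have avoid_Suc: "(\<forall>j<Suc m. block L j \<omega> \<noteq> w) \<longleftrightarrow> stake L \<omega> \<noteq> w \<and> (\<forall>j<m. block L j (sdrop L \<omega>) \<noteq> w)"
    for \<omega>
    using block_sdrop[of L _ 1 \<omega>] by (auto simp: block_def less_Suc_eq_0_disj)
  have "emeasure iid_streams {\<omega> \<in> space iid_streams. \<forall>j<Suc m. block L j \<omega> \<noteq> w}
      = (\<integral>\<^sup>+\<omega>. indicator {xs. xs \<noteq> w} (stake L \<omega>)
           * indicator {\<omega> \<in> space iid_streams. \<forall>j<m. block L j \<omega> \<noteq> w} (sdrop L \<omega>) \<partial>iid_streams)"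
    by (subst nn_integral_indicator[symmetric]) (measurable, auto intro!: nn_integral_cong
        simp: avoid_Suc space_stream_space split: split_indicator)
  also have "\<dots> = emeasure (measure_pmf (replicate_pmf L p)) {xs. xs \<noteq> w}
      * ennreal ((1 - pmf (replicate_pmf L p) w) ^ m)"
    by (subst nn_integral_stake_sdrop) (simp_all add: nn_integral_indicator Suc.IH)
  also have "emeasure (measure_pmf (replicate_pmf L p)) {xs. xs \<noteq> w} = ennreal (1 - pmf (replicate_pmf L p) w)"
    using measure_pmf.prob_compl[of "{w}" "replicate_pmf L p"]
    by (simp add: measure_pmf.emeasure_eq_measure measure_pmf_single Compl_eq_Diff_UNIV[symmetric] Compl_eq)
  finally show ?case by (simp add: ennreal_mult[symmetric] pmf_le_1)
qed

lemma AE_infinitely_many_blocks: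
  assumes "set w \<subseteq> set_pmf p"
  shows "AE \<omega> in iid_streams. \<exists>\<^sub>\<infinity>j. block (length w) j \<omega> = w"
proof -
  interpret prob_space iid_streams by (rule prob_space_iid_streams)
  define L where "L = length w"
  define \<pi> where "\<pi> = pmf (replicate_pmf L p) w"
  have \<pi>: "0 < \<pi>" "\<pi> \<le> 1"
    using assms by (simp_all add: \<pi>_def L_def pmf_positive_iff set_replicate_pmf pmf_le_1 lists_eq_set)
  have "AE \<omega> in iid_streams. \<exists>j\<ge>n. block L j \<omega> = w" for n
  proof -
    define N where "N = {\<omega> \<in> space iid_streams. \<forall>j\<ge>n. block L j \<omega> \<noteq> w}"
    have [measurable]: "N \<in> sets iid_streams" unfolding N_def by measurable
    have "measure iid_streams N \<le> (1 - \<pi>) ^ m" for m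
    proof -
      have "N \<subseteq> {\<omega> \<in> space iid_streams. \<forall>j<m. block L j (sdrop (n * L) \<omega>) \<noteq> w}"
        by (auto simp: N_def block_sdrop dest: spec[of _ "n + _"])
      then have "emeasure iid_streams N
          \<le> emeasure iid_streams {\<omega> \<in> space iid_streams. \<forall>j<m. block L j (sdrop (n * L) \<omega>) \<noteq> w}"
        by (rule emeasure_mono) measurable
      also have "\<dots> = emeasure iid_streams {\<omega> \<in> space iid_streams. \<forall>j<m. block L j \<omega> \<noteq> w}"
        by (rule emeasure_sdrop[where P = "\<lambda>\<omega>. \<forall>j<m. block L j \<omega> \<noteq> w"]) measurable
      also have "\<dots> = ennreal ((1 - \<pi>) ^ m)"
        by (simp add: emeasure_avoid_block \<pi>_def)
      finally show ?thesis using \<pi> by (simp add: emeasure_eq_measure)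
    qed
    moreover have "(\<lambda>m. (1 - \<pi>) ^ m) \<longlonglongrightarrow> 0"
      using \<pi> by (intro LIMSEQ_realpow_zero) simp_all
    ultimately have "measure iid_streams N \<le> 0"
      by (intro LIMSEQ_le_const) auto
    then have "N \<in> null_sets iid_streams"
      by (intro null_setsI) (simp_all add: emeasure_eq_measure measure_le_0_iff)
    then show ?thesis
      by (rule AE_I') (auto simp: N_def)
  qed
  then have "AE \<omega> in iid_streams. \<forall>n. \<exists>j\<ge>n. block L j \<omega> = w"
    by (simp add: AE_all_countable)
  then show ?thesis
    by (simp add: INFM_nat_le L_def)
qed

end

section \<open>Uniqueness of weak limits\<close>

lemma integral_cutoff_tendsto_measure:
  fixes \<nu> :: "'a::metric_space measure"
  assumes sets: "sets \<nu> = sets borel" and "prob_space \<nu>" and S: "S \<in> sets borel"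
    and C: "closed C" "C \<noteq> {}"
  shows "(\<lambda>m. \<integral>x. indicator S x * max 0 (1 - real m * infdist x C) \<partial>\<nu>) \<longlonglongrightarrow> measure \<nu> (S \<inter> C)"
proof -
  interpret prob_space \<nu> by fact
  have [measurable]: "S \<in> sets \<nu>" "S \<inter> C \<in> sets \<nu>" using S C by (simp_all add: sets)
  have [measurable]: "(\<lambda>x. max 0 (1 - real m * infdist x C)) \<in> borel_measurable \<nu>" for m
    unfolding measurable_cong_sets[OF sets refl]
    by (intro borel_measurable_continuous_onI continuous_intros)
  have pointwise: "(\<lambda>m. indicator S x * max 0 (1 - real m * infdist x C)) \<longlonglongrightarrow> indicator (S \<inter> C) x"
    for x
  proof (cases "x \<in> C")
    case False
    then have "0 < infdist x C"
      using C in_closed_iff_infdist_zero[of C x] infdist_nonneg[of x C] by linarith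
    then have "\<forall>\<^sub>F m in sequentially. 1 \<le> real m * infdist x C"
      by (intro eventually_sequentiallyI[of "nat \<lceil>1 / infdist x C\<rceil>"])
         (simp add: field_simps ceiling_le_iff nat_le_iff)
    then have "\<forall>\<^sub>F m in sequentially. indicator S x * max 0 (1 - real m * infdist x C) = (0::real)"
      by eventually_elim simp
    then show ?thesis using False by (simp add: tendsto_eventually)
  qed (simp add: indicator_def)
  have "(\<lambda>m. \<integral>x. indicator S x * max 0 (1 - real m * infdist x C) \<partial>\<nu>) \<longlonglongrightarrow> (\<integral>x. indicator (S \<inter> C) x \<partial>\<nu>)"
  proof (rule integral_dominated_convergence[where w = "\<lambda>_. 1"])
    show "AE x in \<nu>. (\<lambda>m. indicator S x * max 0 (1 - real m * infdist x C)) \<longlonglongrightarrow> indicator (S \<inter> C) x"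
      using pointwise by simp
    show "AE x in \<nu>. norm (indicator S x * max 0 (1 - real m * infdist x C)) \<le> (1::real)" for m
      by (intro AE_I2) (simp add: indicator_def infdist_nonneg)
  qed simp_all
  then show ?thesis by simp
qed

lemma (in prob_space) emeasure_eq_measure_Int_full:
  assumes "S \<in> events" "emeasure M S = 1" "C \<in> events"
  shows "emeasure M C = measure M (S \<inter> C)"
proof -
  have "space M - S \<in> null_sets M"
    using emeasure_compl[of S] assms by (auto simp: emeasure_space_1)
  then have "emeasure M C = emeasure M (C - (space M - S))"
    using assms(3) by (intro emeasure_Diff_null_set[symmetric]) simp_all
  also have "C - (space M - S) = S \<inter> C" using sets.sets_into_space[OF assms(3)] by auto
  finally show ?thesis by (simp add: emeasure_eq_measure)
qed

lemma measure_eqI_bounded_continuous_on: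
  fixes \<nu>1 \<nu>2 :: "'a::metric_space measure"
  assumes sets: "sets \<nu>1 = sets borel" "sets \<nu>2 = sets borel"
    and prob: "prob_space \<nu>1" "prob_space \<nu>2"
    and S: "S \<in> sets borel" "emeasure \<nu>1 S = 1" "emeasure \<nu>2 S = 1"
    and integrals: "\<And>f :: 'a \<Rightarrow> real. continuous_on UNIV f \<Longrightarrow> bounded (range f) \<Longrightarrow>
             (\<integral>x. indicator S x * f x \<partial>\<nu>1) = (\<integral>x. indicator S x * f x \<partial>\<nu>2)"
  shows "\<nu>1 = \<nu>2"
proof -
  have closed_eq: "emeasure \<nu>1 C = emeasure \<nu>2 C" if "closed C" for C
  proof (cases "C = {}")
    case False
    let ?f = "\<lambda>m x. max 0 (1 - real m * infdist x C)"
    have "bounded (range (?f m))" for m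
      unfolding bounded_iff by (intro exI[of _ 1]) (auto simp: infdist_nonneg)
    then have "(\<integral>x. indicator S x * ?f m x \<partial>\<nu>1) = (\<integral>x. indicator S x * ?f m x \<partial>\<nu>2)" for m
      by (intro integrals continuous_intros)
    then have "measure \<nu>1 (S \<inter> C) = measure \<nu>2 (S \<inter> C)"
      using integral_cutoff_tendsto_measure[OF sets(1) prob(1) S(1) that False]
        integral_cutoff_tendsto_measure[OF sets(2) prob(2) S(1) that False]
      by (simp add: LIMSEQ_unique)
    then show ?thesis
      using prob_space.emeasure_eq_measure_Int_full[OF prob(1), of S C]
        prob_space.emeasure_eq_measure_Int_full[OF prob(2), of S C] that S sets
      by simp
  qed simp
  show ?thesis
  proof (rule measure_eqI_generator_eq[where E = "Collect closed" and \<Omega> = UNIV and A = "\<lambda>_. UNIV"])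
    have "sets (borel :: 'a measure) = sigma_sets UNIV (Collect closed)"
      by (subst borel_eq_closed) (simp add: sets_measure_of)
    then show "sets \<nu>1 = sigma_sets UNIV (Collect closed)" "sets \<nu>2 = sigma_sets UNIV (Collect closed)"
      using sets by simp_all
    show "emeasure \<nu>1 UNIV \<noteq> \<infinity>"
      using prob_space.emeasure_le_1[OF prob(1), of UNIV] by (auto simp: top_unique)
  qed (auto simp: Int_stable_def closed_eq)
qed

lemma weak_conv_on_unique:
  fixes \<nu>1 \<nu>2 :: "'a::metric_space measure"
  assumes "weak_conv_on S \<mu> \<nu>1" "weak_conv_on S \<mu> \<nu>2"
    and "sets \<nu>1 = sets borel" "sets \<nu>2 = sets borel" "prob_space \<nu>1" "prob_space \<nu>2"
    and "S \<in> sets borel" "emeasure \<nu>1 S = 1" "emeasure \<nu>2 S = 1"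
  shows "\<nu>1 = \<nu>2"
proof (rule measure_eqI_bounded_continuous_on[OF assms(3-)])
  fix f :: "'a \<Rightarrow> real"
  assume "continuous_on UNIV f" "bounded (range f)"
  then have "continuous_on S f \<and> bounded (f ` S)"
    by (auto intro: continuous_on_subset bounded_subset)
  then show "(\<integral>x. indicator S x * f x \<partial>\<nu>1) = (\<integral>x. indicator S x * f x \<partial>\<nu>2)"
    using assms(1,2) unfolding weak_conv_on_def by (blast intro: LIMSEQ_unique)
qed

section \<open>The limit law of the backward products\<close>

lemma Spos_borel: "Spos \<in> sets borel"
  unfolding Spos_def by measurable

locale random_block_contraction = block_contraction A w \<kappa>
  for A :: "'a::countable \<Rightarrow> real^'n::finite^'n" and w \<kappa> +
  fixes p :: "'a pmf"
  assumes letters_w: "set w \<subseteq> set_pmf p"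
begin

lemma measurable_backward [measurable]: "(\<lambda>\<omega>. backward y \<omega> k) \<in> borel_measurable (iid_streams p)"
  unfolding backward_def
  by (rule measurable_compose[OF measurable_stake_iid_streams, where g = "\<lambda>ws. sgn (mat_word A ws *v y)"]) simp

lemma measurable_backward_limit [measurable]: "backward_limit \<in> borel_measurable (iid_streams p)"
  unfolding backward_limit_def by measurable

definition limit_law :: "(real^'n) measure" where
  "limit_law = distr (iid_streams p) borel backward_limit"

lemma sets_limit_law: "sets limit_law = sets borel"
  by (simp add: limit_law_def)

lemma prob_space_limit_law: "prob_space limit_law"
  unfolding limit_law_def
  by (rule prob_space.prob_space_distr[OF prob_space_iid_streams measurable_backward_limit])

lemma limit_law_Spos: "emeasure limit_law Spos = 1"
proof -
  interpret prob_space "iid_streams p" by (rule prob_space_iid_streams)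
  have "emeasure limit_law Spos = emeasure (iid_streams p) (backward_limit -` Spos \<inter> space (iid_streams p))"
    unfolding limit_law_def by (rule emeasure_distr[OF measurable_backward_limit Spos_borel])
  also have "\<dots> = 1"
    using AE_infinitely_many_blocks[OF letters_w]
    by (intro emeasure_eq_1_AE measurable_sets[OF measurable_backward_limit Spos_borel])
       (auto elim!: eventually_mono simp: backward_limit_in_Spos)
  finally show ?thesis .
qed

lemma backward_in_Spos: "pos_vec y \<Longrightarrow> backward y \<omega> k \<in> Spos"
  using backward_unit_pos by (simp add: Spos_def pos_vec_def)

lemma integral_backward_tendsto:
  fixes G :: "real^'n \<Rightarrow> real"
  assumes y0: "y0 \<in> Spos" and [measurable]: "G \<in> borel_measurable borel"
    and cont: "continuous_on Spos G" and bound: "\<And>x. norm (G x) \<le> B"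
  shows "(\<lambda>k. \<integral>\<omega>. G (backward y0 \<omega> k) \<partial>iid_streams p) \<longlonglongrightarrow> (\<integral>\<omega>. G (backward_limit \<omega>) \<partial>iid_streams p)"
proof (rule integral_dominated_convergence[where w = "\<lambda>_. B"])
  interpret \<Omega>: prob_space "iid_streams p" by (rule prob_space_iid_streams)
  show "integrable (iid_streams p) (\<lambda>_. B)" by (rule \<Omega>.integrable_const)
  have y0_pos: "pos_vec y0" using y0 by (simp add: Spos_def pos_vec_def)
  show "AE \<omega> in iid_streams p. (\<lambda>k. G (backward y0 \<omega> k)) \<longlonglongrightarrow> G (backward_limit \<omega>)"
    using AE_infinitely_many_blocks[OF letters_w]
  proof eventually_elim
    case (elim \<omega>)
    then show ?case
      using backward_tendsto[OF elim y0_pos] backward_limit_in_Spos[OF elim] backward_in_Spos[OF y0_pos]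
      by (intro continuous_on_tendsto_compose[OF cont]) simp_all
  qed
  show "AE \<omega> in iid_streams p. norm (G (backward y0 \<omega> k)) \<le> B" for k
    using bound by (intro AE_I2)
qed simp_all

theorem weak_conv_backward_law:
  assumes "y0 \<in> Spos"
  shows "weak_conv_on Spos
           (\<lambda>k. measure_pmf (map_pmf (\<lambda>ws. sgn (mat_word A ws *v y0)) (replicate_pmf k p))) limit_law"
  unfolding weak_conv_on_def
proof (intro allI impI, elim conjE)
  fix f :: "real^'n \<Rightarrow> real"
  assume cont: "continuous_on Spos f" and bnd: "bounded (f ` Spos)"
  define G where "G x = indicator Spos x * f x" for x
  have [measurable]: "G \<in> borel_measurable borel"
    using borel_measurable_continuous_on_indicator[OF Spos_borel cont] by (simp add: G_def[abs_def])
  have "continuous_on Spos G"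
    using cont by (rule continuous_on_cong[THEN iffD1, rotated 2]) (simp_all add: G_def)
  moreover obtain B where B: "\<And>x. x \<in> Spos \<Longrightarrow> norm (f x) \<le> B"
    using bnd unfolding bounded_iff by blast
  have "norm (G x) \<le> max B 0" for x
    using B[of x] by (auto simp: G_def indicator_def le_max_iff_disj)
  ultimately have "(\<lambda>k. \<integral>\<omega>. G (backward y0 \<omega> k) \<partial>iid_streams p) \<longlonglongrightarrow> (\<integral>\<omega>. G (backward_limit \<omega>) \<partial>iid_streams p)"
    using assms by (intro integral_backward_tendsto) simp_all
  moreover have "(\<integral>x. G x \<partial>map_pmf (\<lambda>ws. sgn (mat_word A ws *v y0)) (replicate_pmf k p))
      = (\<integral>\<omega>. G (backward y0 \<omega> k) \<partial>iid_streams p)" for k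
    using integral_stake[where G = "\<lambda>ws. G (sgn (mat_word A ws *v y0))"]
    by (simp add: integral_map_pmf backward_def)
  moreover have "(\<integral>x. G x \<partial>limit_law) = (\<integral>\<omega>. G (backward_limit \<omega>) \<partial>iid_streams p)"
    unfolding limit_law_def by (rule integral_distr) simp_all
  ultimately show "(\<lambda>k. \<integral>x. indicator Spos x * f x
        \<partial>measure_pmf (map_pmf (\<lambda>ws. sgn (mat_word A ws *v y0)) (replicate_pmf k p)))
      \<longlonglongrightarrow> (\<integral>x. indicator Spos x * f x \<partial>limit_law)"
    by (simp add: G_def)
qed

theorem unique_weak_limit_backward_law:
  "\<exists>!\<nu>. sets \<nu> = sets borel \<and> prob_space \<nu> \<and> emeasure \<nu> Spos = 1 \<and>
     (\<forall>y0\<in>Spos. weak_conv_on Spos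
        (\<lambda>k. measure_pmf (map_pmf (\<lambda>ws. sgn (mat_word A ws *v y0)) (replicate_pmf k p))) \<nu>)"
proof (rule ex1I[of _ limit_law], intro conjI ballI)
  fix \<nu> assume \<nu>: "sets \<nu> = sets borel \<and> prob_space \<nu> \<and> emeasure \<nu> Spos = 1 \<and>
    (\<forall>y0\<in>Spos. weak_conv_on Spos
       (\<lambda>k. measure_pmf (map_pmf (\<lambda>ws. sgn (mat_word A ws *v y0)) (replicate_pmf k p))) \<nu>)"
  have "sgn (1 :: real^'n) \<in> Spos" using backward_in_Spos[OF pos_vec_one, of _ 0] by (simp add: backward_def)
  with \<nu> show "\<nu> = limit_law"
    by (intro weak_conv_on_unique[OF _ weak_conv_backward_law[OF \<open>sgn 1 \<in> Spos\<close>] _ sets_limit_law _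
          prob_space_limit_law Spos_borel _ limit_law_Spos]) auto
qed (simp_all add: sets_limit_law prob_space_limit_law limit_law_Spos weak_conv_backward_law)

end

section \<open>The update matrices\<close>

definition update_mat :: "('n::finite \<Rightarrow> 'n \<Rightarrow> real) \<Rightarrow> ('n \<Rightarrow> real) \<Rightarrow> 'n \<Rightarrow> real^'n^'n" where
  "update_mat P e i = (\<chi> r j. if r = i then e i * P i j else if j = r then 1 else 0)"

lemma Amap_eq_update_mat: "Amap P e i x = update_mat P e i *v x"
proof -
  have "Amap P e i x $ r = (update_mat P e i *v x) $ r" for r
  proof (cases "r = i")
    case True
    then show ?thesis
      by (simp add: Amap_def hatx_def update_mat_def matrix_vector_mult_def sum_distrib_left mult.assoc)
  next
    case False
    have "(update_mat P e i *v x) $ r = (\<Sum>j\<in>UNIV. (if j = r then 1 else 0) * x $ j)"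
      using False by (simp add: update_mat_def matrix_vector_mult_def)
    also have "\<dots> = (\<Sum>j\<in>UNIV. if j = r then x $ j else 0)"
      by (rule sum.cong) simp_all
    finally show ?thesis using False by (simp add: Amap_def)
  qed
  then show ?thesis by (simp add: vec_eq_iff)
qed

lemma stepY_eq_sgn: "stepY P e i y = sgn (update_mat P e i *v y)"
  by (simp add: stepY_def sgn_div_norm Amap_eq_update_mat divide_inverse)

lemma sgn_mult_vec_sgn:
  fixes M :: "real^'n::finite^'m::finite"
  shows "sgn (M *v sgn x) = sgn (M *v x)"
proof (cases "x = 0")
  case False
  have "M *v sgn x = inverse (norm x) *\<^sub>R (M *v x)"
    by (simp add: sgn_div_norm matrix_vector_mult_scaleR)
  then show ?thesis using False by (simp add: sgn_scaleR)
qed simp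

lemma lawY_eq_backward_law:
  assumes "norm y0 = 1"
  shows "lawY P e k y0
    = map_pmf (\<lambda>ws. sgn (mat_word (update_mat P e) ws *v y0)) (replicate_pmf k (pmf_of_set UNIV))"
proof -
  define F where "F ws = sgn (mat_word (update_mat P e) ws *v y0)" for ws
  have "lawY P e k y0 = map_pmf (\<lambda>ws. F (rev ws)) (replicate_pmf k (pmf_of_set UNIV))"
  proof (induction k)
    case 0
    then show ?case using assms by (simp add: F_def sgn_div_norm)
  next
    case (Suc k)
    have step: "stepY P e i (F (rev ws)) = F (rev (ws @ [i]))" for ws i
      by (simp add: F_def stepY_eq_sgn sgn_mult_vec_sgn matrix_vector_mul_assoc)
    have "lawY P e (Suc k) y0 = bind_pmf (replicate_pmf k (pmf_of_set UNIV))
        (\<lambda>ws. map_pmf (\<lambda>i. F (rev (ws @ [i]))) (pmf_of_set UNIV))"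
      by (simp add: Suc.IH bind_map_pmf step)
    also have "\<dots> = map_pmf (\<lambda>ws. F (rev ws)) (replicate_pmf (Suc k) (pmf_of_set UNIV))"
      by (simp only: replicate_pmf_Suc_snoc) (simp add: map_bind_pmf map_pmf_comp)
    finally show ?case .
  qed
  also have "\<dots> = map_pmf F (map_pmf rev (replicate_pmf k (pmf_of_set UNIV)))"
    by (simp add: map_pmf_comp)
  finally show ?thesis by (simp add: map_pmf_rev_replicate_pmf F_def[abs_def])
qed

context
  fixes P :: "'n::finite \<Rightarrow> 'n \<Rightarrow> real" and e :: "'n \<Rightarrow> real"
  assumes P_nonneg: "\<And>i j. 0 \<le> P i j" and e_pos: "\<And>i. 0 < e i"
begin

lemma nonneg_update_mat: "nonneg_mat (update_mat P e i)"
  using P_nonneg e_pos by (simp add: nonneg_mat_def update_mat_def less_imp_le)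

lemma mat_support_update_mat: "mat_support (update_mat P e i) = update_rel {(a, b). 0 < P a b} i"
  using e_pos[of i] by (auto simp: mat_support_def update_rel_def update_mat_def zero_less_mult_iff)

lemma mat_support_mat_word_update:
  "mat_support (mat_word (update_mat P e) ws) = update_word_rel {(a, b). 0 < P a b} ws"
  by (induction ws)
     (simp_all add: mat_support_one mat_support_mult nonneg_update_mat nonneg_mat_word mat_support_update_mat)

lemma pos_vec_update_mat:
  assumes "\<And>i. \<exists>j. 0 < P i j" "pos_vec v"
  shows "pos_vec (update_mat P e i *v v)"
proof (rule pos_vec_mult_vec[OF nonneg_update_mat _ assms(2)])
  show "\<exists>j. 0 < update_mat P e i $ r $ j" for r
  proof (cases "r = i")
    case True
    obtain j where "0 < P i j" using assms(1) by blast
    then show ?thesis using True e_pos[of i] by (intro exI[of _ j]) (simp add: update_mat_def)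
  next
    case False
    then show ?thesis by (intro exI[of _ r]) (simp add: update_mat_def)
  qed
qed

theorem random_block_contraction_update_mat:
  assumes strong: "\<And>i j. (i, j) \<in> {(a, b). 0 < P a b}\<^sup>+"
  shows "\<exists>ws \<kappa>. random_block_contraction (update_mat P e) ws \<kappa> (pmf_of_set UNIV)"
proof -
  obtain ws T where T: "T \<noteq> {}" "\<And>r. update_word_rel {(a, b). 0 < P a b} ws `` {r} = T"
    using synchronizing_update_word[OF strong] by blast
  have "mat_support (mat_word (update_mat P e) ws) `` {r} = T" for r
    using T(2) by (simp add: mat_support_mat_word_update)
  moreover have "nonneg_mat (mat_word (update_mat P e) ws)"
    by (intro nonneg_mat_word nonneg_update_mat)
  ultimately obtain \<kappa> where \<kappa>: "comparable_rows (mat_word (update_mat P e) ws) \<kappa>"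
    using comparable_rows_if_common_support T(1) by blast
  have "\<exists>j. 0 < P i j" for i
    using out_neighbour_if_strongly_connected[OF strong, of i] by blast
  then have "random_block_contraction (update_mat P e) ws \<kappa> (pmf_of_set UNIV)"
    using \<kappa>
    by (intro random_block_contraction.intro block_contraction.intro random_block_contraction_axioms.intro)
       (simp_all add: nonneg_update_mat pos_vec_update_mat)
  then show ?thesis by blast
qed

end

theorem lemma3p2:
  fixes P :: "'n::finite \<Rightarrow> 'n \<Rightarrow> real" and e :: "'n \<Rightarrow> real"
  assumes "CARD('n) \<ge> 2"
    and "\<And>i j. P i j \<ge> 0"
    and "\<And>i. (\<Sum>j\<in>UNIV. P i j) = 1"
    and "\<And>i. P i i = 0"
    and "\<And>i j. (i, j) \<in> {(a, b). P a b > 0}\<^sup>+"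
    and "\<And>i. 0 < e i \<and> e i < 1"
  shows "\<exists>!\<nu>. sets \<nu> = sets (borel :: (real^'n) measure) \<and> prob_space \<nu> \<and> emeasure \<nu> Spos = 1 \<and>
           (\<forall>y0\<in>Spos. weak_conv_on Spos (\<lambda>k. measure_pmf (lawY P e k y0)) \<nu>)"
proof -
  have "\<And>i j. 0 \<le> P i j" "\<And>i. 0 < e i" "\<And>i j. (i, j) \<in> {(a, b). 0 < P a b}\<^sup>+"
    using assms(2,5,6) by auto
  then obtain ws \<kappa> where "random_block_contraction (update_mat P e) ws \<kappa> (pmf_of_set UNIV)"
    using random_block_contraction_update_mat by blast
  then interpret random_block_contraction "update_mat P e" ws \<kappa> "pmf_of_set UNIV" .
  have "lawY P e k y0 = map_pmf (\<lambda>ws. sgn (mat_word (update_mat P e) ws *v y0))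
      (replicate_pmf k (pmf_of_set UNIV))" if "y0 \<in> Spos" for k y0
    using that by (simp add: Spos_def lawY_eq_backward_law)
  then show ?thesis
    using unique_weak_limit_backward_law by (simp cong: ball_cong)
qed

end
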